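(* Assume the setting below with $Y_i(0)=0$ for all $i$. Let $1\le k_1\le k_2\le\dots\le k_J\le N$, and for each $j$ let $$k_j(\alpha)=N_1-Q_{\mathrm H}(1-\alpha;N,N-k_j,N_1).$$ Then $$\Pr\Big(\bigcap_{j=1}^J\{\tau_{(k_j)}\ge y_{(k_j(\alpha))}\}\Big)\ \ge\ 1-\Pr\Big(\bigcup_{j=1}^J\Big\{\sum_{i=1}^N Z_i\mathbb{1}(i>k_j)>Q_{\mathrm H}(1-\alpha;N,N-k_j,N_1)\Big\}\Big).$$ Equality holds when all ITEs $\tau_1,\dots,\tau_N$ are distinct. On the right-hand side, $Z$ is the CRE assignment vector; the right-hand side depends only on $N,N_1,\alpha,k_1,\dots,k_J$.
   Context: Setting: - There are $N$ units with fixed potential outcomes $Y_i(1),Y_i(0)$ and ITE $\tau_i=Y_i(1)-Y_i(0)$. - The sorted ITEs are $\tau_{(1)}\le\dots\le\tau_{(N)}$. - CRE: the assignment vector $Z\in\{0,1\}^N$ is uniformly distributed over vectors with exactly $N_1$ ones, where $1\le N_1<N$. - The observed outcome is $Y_i=Z_iY_i(1)+(1-Z_i)Y_i(0)$. - $Q_{\mathrm H}(\theta;N,n,N_1)=\inf\{x:\Pr(X\le x)\ge\theta\}$ is the $\theta$-quantile of a Hypergeometric random variable $X$ with parameters $(N,n,N_1)$ (population size $N$, $n$ marked items, sample size $N_1$). - $y_{(1)}\le\dots\le y_{(N_1)}$ are the sorted observed outcomes of the treated units, with $y_{(0)}=-\infty$. *)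

theory Defs
  imports "HOL-Probability.Probability"
begin

(* Units are indexed 1..N. An assignment is represented by the set of treated units,
   i.e. Z_i = 1 iff i \<in> Z. *)

definition cre_assignments :: "nat \<Rightarrow> nat \<Rightarrow> nat set set" where
  "cre_assignments N N1 = {Z. Z \<subseteq> {1..N} \<and> card Z = N1}"

definition CRE :: "nat \<Rightarrow> nat \<Rightarrow> nat set pmf" where
  "CRE N N1 = pmf_of_set (cre_assignments N N1)"

(* CDF of Hypergeometric(N, n, N1): population N, n marked, sample size N1 *)
definition hyper_cdf :: "nat \<Rightarrow> nat \<Rightarrow> nat \<Rightarrow> nat \<Rightarrow> real" where
  "hyper_cdf N n N1 x =
     (\<Sum>i\<in>{..min x N1}. real (n choose i) * real ((N - n) choose (N1 - i))) / real (N choose N1)"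

(* theta-quantile Q_H(theta; N, n, N1) = inf {x. P(X \<le> x) \<ge> theta};
   for theta > 0 the infimum is attained at a nonnegative integer *)
definition Q_H :: "real \<Rightarrow> nat \<Rightarrow> nat \<Rightarrow> nat \<Rightarrow> nat" where
  "Q_H \<theta> N n N1 = (LEAST x::nat. hyper_cdf N n N1 x \<ge> \<theta>)"

definition tau_ord :: "nat \<Rightarrow> (nat \<Rightarrow> real) \<Rightarrow> nat \<Rightarrow> real" where
  "tau_ord N \<tau> k = sort (map \<tau> [1..<N+1]) ! (k - 1)"

definition y_ord :: "(nat \<Rightarrow> real) \<Rightarrow> (nat \<Rightarrow> real) \<Rightarrow> nat set \<Rightarrow> nat \<Rightarrow> ereal" where
  "y_ord Y1 Y0 Z m = (if m = 0 then -\<infinity>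
     else ereal (sort (map (\<lambda>i. if i \<in> Z then Y1 i else Y0 i) (sorted_list_of_set Z)) ! (m - 1)))"

end

theory Submission
  imports Defs
begin

(* Let g enumerate the units in increasing order of their effects. Since Y(0) = 0, a treated
   unit's observed outcome is its effect, so tau_(k) \<ge> y_(m) says that at least m treated units
   have effect at most tau_(k). These include the treated units among g{1..k}, of which there are
   N1 minus the number of treated units among g{k+1..N}; without ties there are no others. Hence
   the event of the theorem contains, and without ties equals, the event that for every k at most
   Q_H(1 - alpha; N, N - k, N1) treated units lie in g{k+1..N}. The CRE is invariant under
   permutations of the units, so g may be dropped there, which gives the right-hand side. *)

lemma sorted_nth_le_iff_card:
  fixes ys :: "'a::linorder list"
  assumes "sorted ys" "1 \<le> m" "m \<le> length ys"
  shows "ys ! (m - 1) \<le> t \<longleftrightarrow> m \<le> card {j. j < length ys \<and> ys ! j \<le> t}"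
proof
  assume le: "ys ! (m - 1) \<le> t"
  have "{..<m} \<subseteq> {j. j < length ys \<and> ys ! j \<le> t}"
  proof
    fix j assume "j \<in> {..<m}"
    then have "ys ! j \<le> ys ! (m - 1)" "j < length ys"
      using assms by (auto intro: sorted_nth_mono)
    with le show "j \<in> {j. j < length ys \<and> ys ! j \<le> t}" by auto
  qed
  from card_mono[OF _ this] show "m \<le> card {j. j < length ys \<and> ys ! j \<le> t}" by simp
next
  assume card_ge: "m \<le> card {j. j < length ys \<and> ys ! j \<le> t}"
  show "ys ! (m - 1) \<le> t"
  proof (rule ccontr)
    assume gt: "\<not> ys ! (m - 1) \<le> t"
    have "{j. j < length ys \<and> ys ! j \<le> t} \<subseteq> {..<m - 1}"
    proof
      fix j assume j: "j \<in> {j. j < length ys \<and> ys ! j \<le> t}"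
      show "j \<in> {..<m - 1}"
      proof (rule ccontr)
        assume "j \<notin> {..<m - 1}"
        then have "ys ! (m - 1) \<le> ys ! j" using assms(1) j by (auto intro: sorted_nth_mono)
        with gt j show False by auto
      qed
    qed
    from card_mono[OF _ this] card_ge assms show False by simp
  qed
qed

lemma y_ord_le_ereal_iff:
  assumes "finite Z" "m \<le> card Z"
  shows "y_ord Y1 Y0 Z m \<le> ereal t \<longleftrightarrow> m \<le> card {i\<in>Z. Y1 i \<le> t}"
proof (cases "m = 0")
  case True
  then show ?thesis by (simp add: y_ord_def)
next
  case False
  define zs where "zs = sorted_list_of_set Z"
  have zs: "set zs = Z" "distinct zs" "length zs = card Z"
    using assms by (auto simp: zs_def)
  have observed: "map (\<lambda>i. if i \<in> Z then Y1 i else Y0 i) zs = map Y1 zs"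
    using zs(1) by auto
  define ys where "ys = sort (map Y1 zs)"
  have "card {j. j < length ys \<and> ys ! j \<le> t} = length (filter (\<lambda>y. y \<le> t) ys)"
    by (simp add: length_filter_conv_card)
  also have "\<dots> = length (filter (\<lambda>i. Y1 i \<le> t) zs)"
    by (simp add: ys_def filter_sort filter_map comp_def)
  also have "\<dots> = card {i\<in>Z. Y1 i \<le> t}"
    using distinct_length_filter[OF zs(2)] zs(1) by (simp add: Int_def conj_commute)
  finally have count: "card {j. j < length ys \<and> ys ! j \<le> t} = card {i\<in>Z. Y1 i \<le> t}" .
  have "y_ord Y1 Y0 Z m = ereal (ys ! (m - 1))"
    using False by (simp add: y_ord_def ys_def observed flip: zs_def)
  with sorted_nth_le_iff_card[of ys m t] False assms zs(3) count show ?thesis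
    by (simp add: ys_def)
qed

lemma sum_of_bool_treated_above_eq_card:
  fixes Z :: "nat set"
  assumes "Z \<subseteq> {1..N}"
  shows "(\<Sum>i\<in>{1..N}. of_bool (i \<in> Z) * of_bool (i > k) :: nat) = card (Z \<inter> {k<..N})"
proof -
  have "(\<Sum>i\<in>{1..N}. of_bool (i \<in> Z) * of_bool (i > k) :: nat)
      = (\<Sum>i\<in>{1..N}. of_bool (i \<in> Z \<and> i > k))"
    by (intro sum.cong) auto
  also have "\<dots> = card ({1..N} \<inter> {i. i \<in> Z \<and> i > k})"
    by (subst sum_of_bool_eq) auto
  also have "{1..N} \<inter> {i. i \<in> Z \<and> i > k} = Z \<inter> {k<..N}"
    using assms by auto
  finally show ?thesis .
qed

lemma measure_pmf_cong_on_support: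
  assumes "\<And>x. x \<in> set_pmf p \<Longrightarrow> x \<in> A \<longleftrightarrow> x \<in> B"
  shows "measure_pmf.prob p A = measure_pmf.prob p B"
  using assms by (intro measure_prob_cong_0) (auto simp: set_pmf_eq)

lemma measure_pmf_mono_on_support:
  assumes "\<And>x. x \<in> set_pmf p \<Longrightarrow> x \<in> A \<Longrightarrow> x \<in> B"
  shows "measure_pmf.prob p A \<le> measure_pmf.prob p B"
proof -
  have "measure_pmf.prob p A = measure_pmf.prob p (A \<inter> set_pmf p)"
    by (simp add: measure_Int_set_pmf)
  also have "\<dots> \<le> measure_pmf.prob p B"
    using assms by (intro measure_pmf.finite_measure_mono) auto
  finally show ?thesis .
qed

lemma finite_cre_assignments: "finite (cre_assignments N N1)"
  unfolding cre_assignments_def by (rule finite_subset[of _ "Pow {1..N}"]) auto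

lemma cre_assignments_nonempty: "N1 \<le> N \<Longrightarrow> cre_assignments N N1 \<noteq> {}"
  by (auto simp: cre_assignments_def intro!: exI[of _ "{1..N1}"])

lemma set_pmf_CRE: "N1 \<le> N \<Longrightarrow> set_pmf (CRE N N1) = cre_assignments N N1"
  by (simp add: CRE_def finite_cre_assignments cre_assignments_nonempty)

lemma image_cre_assignments_bij:
  assumes "bij_betw h {1..N} {1..N}"
  shows "inj_on (image h) (cre_assignments N N1)"
    and "image h ` cre_assignments N N1 = cre_assignments N N1"
proof -
  have inj: "inj_on h {1..N}" and surj: "h ` {1..N} = {1..N}"
    using assms by (auto simp: bij_betw_def)
  show inj_image: "inj_on (image h) (cre_assignments N N1)"
    using inj_on_image_eq_iff[OF inj] by (auto simp: inj_on_def cre_assignments_def)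
  have "image h ` cre_assignments N N1 \<subseteq> cre_assignments N N1"
    using surj inj_on_subset[OF inj] by (auto simp: cre_assignments_def card_image)
  moreover have "card (image h ` cre_assignments N N1) = card (cre_assignments N N1)"
    using inj_image by (rule card_image)
  ultimately show "image h ` cre_assignments N N1 = cre_assignments N N1"
    by (intro card_subset_eq finite_cre_assignments)
qed

lemma map_pmf_image_CRE:
  assumes "bij_betw h {1..N} {1..N}" "N1 \<le> N"
  shows "map_pmf (image h) (CRE N N1) = CRE N N1"
  unfolding CRE_def using image_cre_assignments_bij[OF assms(1)] assms(2)
  by (simp add: map_pmf_of_set_inj finite_cre_assignments cre_assignments_nonempty)

lemma prob_CRE_image_bij:
  assumes "bij_betw h {1..N} {1..N}" "N1 \<le> N"
  shows "measure_pmf.prob (CRE N N1) {Z. P (h ` Z)} = measure_pmf.prob (CRE N N1) {Z. P Z}"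
  by (subst map_pmf_image_CRE[OF assms, symmetric]) (simp add: vimage_def)

lemma sort_map_eq_map_sort_key: "sort (map f xs) = map f (sort_key f xs)"
  by (rule properties_for_sort) simp_all

lemma tau_ord_sorting_bij:
  fixes \<tau> :: "nat \<Rightarrow> real"
  obtains g where "bij_betw g {1..N} {1..N}"
    and "\<And>j k. j \<in> {1..N} \<Longrightarrow> k \<in> {1..N} \<Longrightarrow> j \<le> k \<Longrightarrow> \<tau> (g j) \<le> \<tau> (g k)"
    and "\<And>k. k \<in> {1..N} \<Longrightarrow> tau_ord N \<tau> k = \<tau> (g k)"
proof
  define L where "L = sort_key \<tau> [1..<N+1]"
  have L: "length L = N" "distinct L" "set L = {1..N}" "sorted (map \<tau> L)"
    by (auto simp: L_def)
  have "bij_betw (\<lambda>j. j - 1) {1..N} {..<N}"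
    by (rule bij_betw_byWitness[where f' = Suc]) auto
  moreover have "bij_betw ((!) L) {..<N} {1..N}"
    using L by (intro bij_betw_nth) auto
  ultimately show "bij_betw (\<lambda>j. L ! (j - 1)) {1..N} {1..N}"
    by (rule bij_betw_trans[unfolded comp_def])
  show "\<tau> (L ! (j - 1)) \<le> \<tau> (L ! (k - 1))" if "j \<in> {1..N}" "k \<in> {1..N}" "j \<le> k" for j k
    using sorted_nth_mono[OF L(4), of "j - 1" "k - 1"] that L(1) by simp
  show "tau_ord N \<tau> k = \<tau> (L ! (k - 1))" if "k \<in> {1..N}" for k
    unfolding tau_ord_def sort_map_eq_map_sort_key L_def[symmetric] using that L(1) by (subst nth_map) auto
qed

lemma card_treated_below_plus_above:
  fixes \<tau> :: "nat \<Rightarrow> 'a::linorder"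
  assumes g: "bij_betw g {1..N} {1..N}"
    and mono: "\<And>j k. j \<in> {1..N} \<Longrightarrow> k \<in> {1..N} \<Longrightarrow> j \<le> k \<Longrightarrow> \<tau> (g j) \<le> \<tau> (g k)"
    and k: "k \<in> {1..N}" and Z: "Z \<subseteq> {1..N}"
  shows "card Z \<le> card {i\<in>Z. \<tau> i \<le> \<tau> (g k)} + card (Z \<inter> g ` {k<..N})"
    and "inj_on \<tau> {1..N} \<Longrightarrow> card {i\<in>Z. \<tau> i \<le> \<tau> (g k)} + card (Z \<inter> g ` {k<..N}) = card Z"
proof -
  have inj: "inj_on g {1..N}" and surj: "g ` {1..N} = {1..N}"
    using g by (auto simp: bij_betw_def)
  have fin: "finite Z" using Z finite_subset by blast
  have "g ` {k<..N} = g ` ({1..N} - {1..k})"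
    by (rule arg_cong[where f = "image g"]) (use k in auto)
  also have "\<dots> = {1..N} - g ` {1..k}"
    using inj k surj by (subst inj_on_image_set_diff) auto
  finally have "Z \<inter> g ` {k<..N} = Z - g ` {1..k}" using Z by blast
  then have split: "card Z = card (Z \<inter> g ` {1..k}) + card (Z \<inter> g ` {k<..N})"
    using card_Int_Diff[OF fin] by simp
  have prefix: "Z \<inter> g ` {1..k} \<subseteq> {i\<in>Z. \<tau> i \<le> \<tau> (g k)}"
    using mono k by auto
  show "card Z \<le> card {i\<in>Z. \<tau> i \<le> \<tau> (g k)} + card (Z \<inter> g ` {k<..N})"
    using split card_mono[OF _ prefix] fin by simp
  assume inj_\<tau>: "inj_on \<tau> {1..N}"
  have "{i\<in>Z. \<tau> i \<le> \<tau> (g k)} \<subseteq> Z \<inter> g ` {1..k}"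
  proof
    fix i assume i: "i \<in> {i\<in>Z. \<tau> i \<le> \<tau> (g k)}"
    then obtain j where j: "j \<in> {1..N}" "i = g j" using Z surj by blast
    have "j \<le> k"
    proof (rule ccontr)
      assume "\<not> j \<le> k"
      then have "g k \<noteq> g j" using inj_onD[OF inj, of k j] j k by auto
      then have "\<tau> (g k) \<noteq> \<tau> (g j)"
        using inj_onD[OF inj_\<tau>] surj j k by blast
      with mono[OF k j(1)] \<open>\<not> j \<le> k\<close> i j show False by auto
    qed
    with i j show "i \<in> Z \<inter> g ` {1..k}" by auto
  qed
  with prefix have "{i\<in>Z. \<tau> i \<le> \<tau> (g k)} = Z \<inter> g ` {1..k}" by blast
  with split show "card {i\<in>Z. \<tau> i \<le> \<tau> (g k)} + card (Z \<inter> g ` {k<..N}) = card Z" by simp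
qed

lemma one_minus_prob_CRE_exceeds:
  assumes "N1 \<le> N"
  shows "1 - measure_pmf.prob (CRE N N1) {Z. \<exists>k\<in>K.
             (\<Sum>i\<in>{1..N}. of_bool (i \<in> Z) * of_bool (i > k) :: nat) > q k}
       = measure_pmf.prob (CRE N N1) {Z. \<forall>k\<in>K. card (Z \<inter> {k<..N}) \<le> q k}"
proof -
  let ?B = "{Z. \<exists>k\<in>K. (\<Sum>i\<in>{1..N}. of_bool (i \<in> Z) * of_bool (i > k) :: nat) > q k}"
  have "1 - measure_pmf.prob (CRE N N1) ?B = measure_pmf.prob (CRE N N1) (- ?B)"
    unfolding Compl_eq_Diff_UNIV
    by (simp only: measure_pmf.prob_compl[of _ "CRE N N1", simplified])
  also have "\<dots> = measure_pmf.prob (CRE N N1) {Z. \<forall>k\<in>K. card (Z \<inter> {k<..N}) \<le> q k}"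
  proof (rule measure_pmf_cong_on_support)
    fix Z assume "Z \<in> set_pmf (CRE N N1)"
    then have "Z \<subseteq> {1..N}" using assms by (simp add: set_pmf_CRE cre_assignments_def)
    then show "Z \<in> - ?B \<longleftrightarrow> Z \<in> {Z. \<forall>k\<in>K. card (Z \<inter> {k<..N}) \<le> q k}"
      by (simp only: Compl_iff mem_Collect_eq sum_of_bool_treated_above_eq_card) (auto simp: not_less)
  qed
  finally show ?thesis .
qed

lemma prob_CRE_card_above_bij:
  assumes g: "bij_betw g {1..N} {1..N}" and "N1 \<le> N"
  shows "measure_pmf.prob (CRE N N1) {Z. \<forall>k\<in>K. card (Z \<inter> {k<..N}) \<le> q k}
       = measure_pmf.prob (CRE N N1) {Z. \<forall>k\<in>K. card (Z \<inter> g ` {k<..N}) \<le> q k}"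
proof -
  have "measure_pmf.prob (CRE N N1) {Z. \<forall>k\<in>K. card (Z \<inter> {k<..N}) \<le> q k}
      = measure_pmf.prob (CRE N N1) {Z. \<forall>k\<in>K. card (g ` Z \<inter> g ` {k<..N}) \<le> q k}"
  proof (rule measure_pmf_cong_on_support)
    fix Z assume "Z \<in> set_pmf (CRE N N1)"
    then have Z: "Z \<subseteq> {1..N}" using assms(2) by (simp add: set_pmf_CRE cre_assignments_def)
    have "card (g ` Z \<inter> g ` {k<..N}) = card (Z \<inter> {k<..N})" for k
      using Z bij_betw_imp_inj_on[OF g]
      by (subst inj_on_image_Int[symmetric, of g "{1..N}"])
         (auto intro!: card_image elim: inj_on_subset)
    then show "Z \<in> {Z. \<forall>k\<in>K. card (Z \<inter> {k<..N}) \<le> q k} \<longleftrightarrow>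
               Z \<in> {Z. \<forall>k\<in>K. card (g ` Z \<inter> g ` {k<..N}) \<le> q k}" by simp
  qed
  also have "\<dots> = measure_pmf.prob (CRE N N1) {Z. \<forall>k\<in>K. card (Z \<inter> g ` {k<..N}) \<le> q k}"
    using prob_CRE_image_bij[OF assms] by simp
  finally show ?thesis .
qed

lemma y_ord_le_tau_ord_card_above:
  fixes Y1 Y0 :: "nat \<Rightarrow> real"
  assumes g: "bij_betw g {1..N} {1..N}"
    and ord: "\<And>k. k \<in> {1..N} \<Longrightarrow> tau_ord N Y1 k = Y1 (g k)"
    and mono: "\<And>j k. j \<in> {1..N} \<Longrightarrow> k \<in> {1..N} \<Longrightarrow> j \<le> k \<Longrightarrow> Y1 (g j) \<le> Y1 (g k)"
    and k: "k \<in> {1..N}" and Z: "Z \<in> cre_assignments N N1"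
  shows "card (Z \<inter> g ` {k<..N}) \<le> q \<Longrightarrow> y_ord Y1 Y0 Z (N1 - q) \<le> ereal (tau_ord N Y1 k)"
    and "inj_on Y1 {1..N} \<Longrightarrow> y_ord Y1 Y0 Z (N1 - q) \<le> ereal (tau_ord N Y1 k)
           \<Longrightarrow> card (Z \<inter> g ` {k<..N}) \<le> q"
proof -
  have Zsub: "Z \<subseteq> {1..N}" and cardZ: "card Z = N1"
    using Z by (simp_all add: cre_assignments_def)
  have event: "y_ord Y1 Y0 Z (N1 - q) \<le> ereal (tau_ord N Y1 k)
      \<longleftrightarrow> N1 - q \<le> card {i\<in>Z. Y1 i \<le> Y1 (g k)}"
    using y_ord_le_ereal_iff[of Z "N1 - q"] finite_subset[OF Zsub] cardZ by (simp add: ord[OF k])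
  show "y_ord Y1 Y0 Z (N1 - q) \<le> ereal (tau_ord N Y1 k)" if "card (Z \<inter> g ` {k<..N}) \<le> q"
    using card_treated_below_plus_above(1)[where \<tau> = Y1, OF g mono k Zsub] that event cardZ
    by simp
  show "card (Z \<inter> g ` {k<..N}) \<le> q"
    if "inj_on Y1 {1..N}" "y_ord Y1 Y0 Z (N1 - q) \<le> ereal (tau_ord N Y1 k)"
    using card_treated_below_plus_above(2)[where \<tau> = Y1, OF g mono k Zsub that(1)] that(2)
      event cardZ
    by simp
qed

theorem proposition3:
  fixes N N1 :: nat and Y1 Y0 :: "nat \<Rightarrow> real" and \<alpha> :: real and ks :: "nat list"
  assumes "1 \<le> N1" and "N1 < N"
    and "\<forall>i. Y0 i = 0"
    and "0 < \<alpha>" and "\<alpha> < 1"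
    and "sorted ks" and "\<forall>k\<in>set ks. 1 \<le> k \<and> k \<le> N"
  defines "\<tau> \<equiv> (\<lambda>i. Y1 i - Y0 i)"
  defines "k\<alpha> \<equiv> (\<lambda>k. N1 - Q_H (1 - \<alpha>) N (N - k) N1)"
  defines "lhs \<equiv> measure_pmf.prob (CRE N N1)
             {Z. \<forall>k\<in>set ks. ereal (tau_ord N \<tau> k) \<ge> y_ord Y1 Y0 Z (k\<alpha> k)}"
  defines "rhs \<equiv> 1 - measure_pmf.prob (CRE N N1)
             {Z. \<exists>k\<in>set ks. (\<Sum>i\<in>{1..N}. of_bool (i \<in> Z) * of_bool (i > k) :: nat)
                                 > Q_H (1 - \<alpha>) N (N - k) N1}"
  shows "lhs \<ge> rhs \<and> (inj_on \<tau> {1..N} \<longrightarrow> lhs = rhs)"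
proof -
  let ?Q = "\<lambda>k. Q_H (1 - \<alpha>) N (N - k) N1"
  have \<tau>_eq: "\<tau> = Y1" using assms(3) by (simp add: \<tau>_def)
  have ks: "k \<in> {1..N}" if "k \<in> set ks" for k using that assms(7) by simp
  have support: "set_pmf (CRE N N1) = cre_assignments N N1"
    using assms(2) by (simp add: set_pmf_CRE)
  obtain g where g: "bij_betw g {1..N} {1..N}"
    and mono: "\<And>j k. j \<in> {1..N} \<Longrightarrow> k \<in> {1..N} \<Longrightarrow> j \<le> k \<Longrightarrow> Y1 (g j) \<le> Y1 (g k)"
    and ord: "\<And>k. k \<in> {1..N} \<Longrightarrow> tau_ord N Y1 k = Y1 (g k)"
    using tau_ord_sorting_bij[of N Y1] by blast
  note event = y_ord_le_tau_ord_card_above[OF g ord mono]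
  define A where "A = {Z. \<forall>k\<in>set ks. card (Z \<inter> g ` {k<..N}) \<le> ?Q k}"
  have rhs_A: "rhs = measure_pmf.prob (CRE N N1) A"
    using assms(2) unfolding rhs_def A_def
    by (simp only: less_imp_le one_minus_prob_CRE_exceeds prob_CRE_card_above_bij[OF g])
  have "measure_pmf.prob (CRE N N1) A \<le> lhs"
    unfolding lhs_def \<tau>_eq k\<alpha>_def
    by (rule measure_pmf_mono_on_support) (auto simp: support A_def intro: event(1) ks)
  moreover have "lhs \<le> measure_pmf.prob (CRE N N1) A" if "inj_on \<tau> {1..N}"
    unfolding lhs_def \<tau>_eq k\<alpha>_def
    by (rule measure_pmf_mono_on_support)
       (use that in \<open>auto simp: support A_def \<tau>_eq intro: event(2) ks\<close>)
  ultimately show ?thesis using rhs_A by auto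
qed

end
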